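(* Let $k\ge2$, $1\le m<k$, and alternatives $\ell=1,\dots,k$ with i.i.d. replications (independent across alternatives) whose means are pairwise distinct and ordered $\mu_{\langle 1\rangle}>\dots>\mu_{\langle k\rangle}$, satisfying Assumptions 1–4 of the context, and let $G_{ij}$ be as in the context. Let $r^*=(r^*_{\langle1\rangle},\dots,r^*_{\langle k\rangle})$ be an optimal solution of maximize $\min_{i\in\{1,\dots,m\},j\in\{m+1,\dots,k\}}G_{ij}(r_{\langle i\rangle},r_{\langle j\rangle})$ subject to $\sum_{\ell=1}^kr_{\langle\ell\rangle}=1$, $r_{\langle\ell\rangle}\ge0$. Then for all $h\in\{1,\dots,m\}$ and $\ell\in\{m+1,\dots,k\}$, $\min_{j\in\{m+1,\dots,k\}}G_{hj}(r^*_{\langle h\rangle},r^*_{\langle j\rangle})=\min_{i\in\{1,\dots,m\}}G_{i\ell}(r^*_{\langle i\rangle},r^*_{\langle \ell\rangle})$.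
   Context: $G_{ij}(r_{\langle i\rangle},r_{\langle j\rangle})=\inf_{x\in\mathbb R}\big(r_{\langle i\rangle}\Lambda^*_{\langle i\rangle}(x)+r_{\langle j\rangle}\Lambda^*_{\langle j\rangle}(x)\big)$ (the large deviations rate of the event $\bar X_{\langle j\rangle}(r_{\langle j\rangle}T)\ge\bar X_{\langle i\rangle}(r_{\langle i\rangle}T)$), where $\Lambda^*_\ell(x)=\sup_\lambda\{\lambda x-\Lambda_\ell(\lambda)\}$. $\bar X_\ell(n)$ is the sample mean of $n$ replications of alternative $\ell$, $\Lambda^{(n)}_\ell(\lambda)=\log\mathbb E[e^{\lambda\bar X_\ell(n)}]$. Assumption 1: $\Lambda_\ell(\lambda)=\lim_{n\to\infty}\frac1n\Lambda^{(n)}_\ell(n\lambda)$ exists as an extended real number for all $\lambda$. With $\mathcal D_{\Lambda_\ell}=\{\lambda:\Lambda_\ell(\lambda)<\infty\}$, interior $\mathcal D^o_{\Lambda_\ell}$, and $\mathcal F_\ell=\{\Lambda'_\ell(\lambda):\lambda\in\mathcal D^o_{\Lambda_\ell}\}$, interior $\mathcal F^o_\ell$: Assumption 2: $0\in\mathcal D^o_{\Lambda_\ell}$. Assumption 3: $\Lambda_\ell$ strictly convex, continuous on $\mathcal D^o_{\Lambda_\ell}$ and steep. Assumption 4: $[\mu_{\langle k\rangle},\mu_{\langle1\rangle}]\subset\bigcap_\ell\mathcal F^o_\ell$. *)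

theory Defs
  imports "HOL-Probability.Probability"
begin

text \<open>M is the distribution (a probability measure on the reals) of a single replication
 of an alternative.  Replications are i.i.d., so n replications are distributed as the
 product measure PiM {..<n} (\<lambda>_. M).\<close>

definition cgf_n :: "real measure \<Rightarrow> nat \<Rightarrow> real \<Rightarrow> ereal" where
  "cgf_n M n lam =
     (let I = (\<integral>\<^sup>+ x. ennreal (exp (lam * ((\<Sum>i<n. x i) / real n))) \<partial>(PiM {..<n} (\<lambda>_. M)))
      in if I = \<top> then \<infinity> else ereal (ln (enn2real I)))"

definition scaled_cgf :: "real measure \<Rightarrow> real \<Rightarrow> nat \<Rightarrow> ereal" where
  "scaled_cgf M lam n = cgf_n M n (real n * lam) / ereal (real n)"

definition assumption1 :: "real measure \<Rightarrow> bool" where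
  "assumption1 M \<longleftrightarrow> (\<forall>lam. convergent (scaled_cgf M lam))"

definition Lambda :: "real measure \<Rightarrow> real \<Rightarrow> ereal" where
  "Lambda M lam = lim (scaled_cgf M lam)"

definition Lambda_real :: "real measure \<Rightarrow> real \<Rightarrow> real" where
  "Lambda_real M lam = real_of_ereal (Lambda M lam)"

definition dom_Lambda :: "real measure \<Rightarrow> real set" where
  "dom_Lambda M = {lam. Lambda M lam < \<infinity>}"

definition F_set :: "real measure \<Rightarrow> real set" where
  "F_set M = (\<lambda>lam. deriv (Lambda_real M) lam) ` interior (dom_Lambda M)"

definition strictly_convex_on :: "real set \<Rightarrow> (real \<Rightarrow> real) \<Rightarrow> bool" where
  "strictly_convex_on S f \<longleftrightarrow> convex S \<and>
     (\<forall>x\<in>S. \<forall>y\<in>S. \<forall>t. x \<noteq> y \<longrightarrow> 0 < t \<longrightarrow> t < 1 \<longrightarrow>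
        f ((1 - t) * x + t * y) < (1 - t) * f x + t * f y)"

definition steep :: "real measure \<Rightarrow> bool" where
  "steep M \<longleftrightarrow>
     (\<forall>lam\<in>interior (dom_Lambda M). Lambda_real M differentiable (at lam)) \<and>
     (\<forall>s b. b \<in> frontier (interior (dom_Lambda M)) \<longrightarrow>
        (\<forall>n. s n \<in> interior (dom_Lambda M)) \<longrightarrow> s \<longlonglongrightarrow> b \<longrightarrow>
        filterlim (\<lambda>n. \<bar>deriv (Lambda_real M) (s n)\<bar>) at_top sequentially)"

definition assumption2 :: "real measure \<Rightarrow> bool" where
  "assumption2 M \<longleftrightarrow> 0 \<in> interior (dom_Lambda M)"

definition assumption3 :: "real measure \<Rightarrow> bool" where
  "assumption3 M \<longleftrightarrow> strictly_convex_on (dom_Lambda M) (Lambda_real M) \<and>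
     continuous_on (interior (dom_Lambda M)) (Lambda_real M) \<and> steep M"

definition rate :: "real measure \<Rightarrow> real \<Rightarrow> ereal" where
  "rate M x = (SUP lam. ereal (lam * x) - Lambda M lam)"

definition G :: "(nat \<Rightarrow> real measure) \<Rightarrow> nat \<Rightarrow> nat \<Rightarrow> real \<Rightarrow> real \<Rightarrow> ereal" where
  "G M i j a b = (INF x. ereal a * rate (M i) x + ereal b * rate (M j) x)"

definition objective :: "(nat \<Rightarrow> real measure) \<Rightarrow> nat \<Rightarrow> nat \<Rightarrow> (nat \<Rightarrow> real) \<Rightarrow> ereal" where
  "objective M k m r = (INF p\<in>{1..m} \<times> {m+1..k}. G M (fst p) (snd p) (r (fst p)) (r (snd p)))"

definition alloc_simplex :: "nat \<Rightarrow> (nat \<Rightarrow> real) set" where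
  "alloc_simplex k = {r. (\<Sum>l=1..k. r l) = 1 \<and> (\<forall>l\<in>{1..k}. r l \<ge> 0)}"

end

(*
  For i.i.d. replications the scaled cumulant generating functions do not depend on n, so Lambda
  is the logarithmic moment generating function of a single replication. Jensen's inequality gives Lambda(lam) >= lam mu, so, Lambda being differentiable
  at 0, Lambda'(0) = mu. Hence the rate function is nonnegative, vanishes at mu and is bounded
  away from 0 outside every neighbourhood of mu. Consequently G_ij is nonnegative, monotone and
  positively homogeneous in its weights, vanishes when either weight does, and is positive when
  both weights are positive and mu_i > mu_j.

  Suppose that at an optimal allocation some alternative s had all its pairwise rates above the
  optimal value V. Moving part of the weight of s evenly to the other alternatives keeps the rates
  of the pairs through s above V by homogeneity, and strictly increases both weights of every
  other pair, which lifts its rate above V (by homogeneity if V > 0, by positivity if V = 0).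
  This contradicts optimality, so the minimum over the pairs through any alternative equals V.
*)

theory Submission
  imports Defs
begin

definition mgf :: "real measure \<Rightarrow> real \<Rightarrow> ennreal" where
  "mgf N lam = (\<integral>\<^sup>+x. ennreal (exp (lam * x)) \<partial>N)"

context real_distribution
begin

lemma nn_integral_exp_sum_PiM:
  "(\<integral>\<^sup>+x. ennreal (exp (lam * (\<Sum>i<n. x i))) \<partial>PiM {..<n} (\<lambda>_. M)) = mgf M lam ^ n"
proof -
  interpret product_sigma_finite "\<lambda>_. M"
    by (simp add: product_sigma_finite_def sigma_finite_measure_axioms)
  have "(\<integral>\<^sup>+x. ennreal (exp (lam * (\<Sum>i<n. x i))) \<partial>PiM {..<n} (\<lambda>_. M))
      = (\<integral>\<^sup>+x. (\<Prod>i<n. ennreal (exp (lam * x i))) \<partial>PiM {..<n} (\<lambda>_. M))"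
    by (simp add: sum_distrib_left exp_sum prod_ennreal)
  also have "\<dots> = (\<Prod>i<n. mgf M lam)"
    unfolding mgf_def by (rule product_nn_integral_prod) auto
  finally show ?thesis by simp
qed

lemma scaled_cgf_eq_log_mgf:
  assumes "n > 0"
  shows "scaled_cgf M lam n =
    (if mgf M lam = \<top> then \<infinity> else ereal (ln (enn2real (mgf M lam))))"
proof -
  have sample:
    "(\<integral>\<^sup>+x. ennreal (exp (real n * lam * ((\<Sum>i<n. x i) / real n))) \<partial>PiM {..<n} (\<lambda>_. M))
      = mgf M lam ^ n"
    using assms nn_integral_exp_sum_PiM by simp
  show ?thesis
  proof (cases "mgf M lam = \<top>")
    case False
    then obtain v where v: "mgf M lam = ennreal v" "0 \<le> v"
      by (cases "mgf M lam") auto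
    have "ln (v ^ n) = real n * ln v"
      by (cases "v = 0") (use assms v in \<open>auto simp: ln_realpow\<close>)
    then show ?thesis
      using sample assms v by (simp add: scaled_cgf_def cgf_n_def ennreal_power)
  next
    case True
    then have "mgf M lam ^ n = \<top>"
      using assms by (simp add: power_eq_top_ennreal_iff)
    with sample True show ?thesis
      using assms by (simp add: scaled_cgf_def cgf_n_def)
  qed
qed

lemma Lambda_eq_log_mgf:
  "Lambda M lam = (if mgf M lam = \<top> then \<infinity> else ereal (ln (enn2real (mgf M lam))))"
  unfolding Lambda_def
  by (rule limI, rule tendsto_eventually, rule eventually_sequentiallyI[of 1])
     (simp add: scaled_cgf_eq_log_mgf)

lemma Lambda_zero: "Lambda M 0 = 0"
  using emeasure_space_1 by (simp add: Lambda_eq_log_mgf mgf_def)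

lemma Lambda_real_zero: "Lambda_real M 0 = 0"
  by (simp add: Lambda_real_def Lambda_zero)

lemma Lambda_eq_Lambda_real: "lam \<in> dom_Lambda M \<Longrightarrow> Lambda M lam = ereal (Lambda_real M lam)"
  by (cases "mgf M lam = \<top>") (auto simp: dom_Lambda_def Lambda_real_def Lambda_eq_log_mgf)

lemma Lambda_ge_mean:
  assumes "integrable M (\<lambda>x. x)"
  shows "ereal (lam * (\<integral>x. x \<partial>M)) \<le> Lambda M lam"
proof (cases "mgf M lam = \<top>")
  case False
  then obtain v where v: "mgf M lam = ennreal v" "0 \<le> v"
    by (cases "mgf M lam") auto
  have exp_integrable: "integrable M (\<lambda>x. exp (lam * x))"
    using v by (intro integrableI_nn_integral_finite[where x = v]) (auto simp: mgf_def)
  have "exp (lam * (\<integral>x. x \<partial>M)) \<le> (\<integral>x. exp (lam * x) \<partial>M)"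
    using jensens_inequality[where X = "\<lambda>x. lam * x" and I = UNIV and q = exp]
      assms exp_integrable exp_convex by simp
  also have "\<dots> = enn2real (mgf M lam)"
    unfolding mgf_def by (subst nn_integral_eq_integral[OF exp_integrable]) auto
  finally have "exp (lam * (\<integral>x. x \<partial>M)) \<le> enn2real (mgf M lam)" .
  moreover from this have "0 < enn2real (mgf M lam)"
    using exp_gt_zero order_less_le_trans by blast
  ultimately show ?thesis
    using False by (simp add: Lambda_eq_log_mgf ln_ge_iff)
qed (simp add: Lambda_eq_log_mgf)

end

lemma rate_ge: "ereal (lam * x) - Lambda N lam \<le> rate N x"
  unfolding rate_def by (rule SUP_upper) simp

lemma (in real_distribution) rate_nonneg: "0 \<le> rate M x"
  using rate_ge[where N = M and lam = 0] by (simp add: Lambda_zero zero_ereal_def)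

lemma (in real_distribution) rate_ge_secant:
  assumes "lam \<in> dom_Lambda M" "lam * c \<le> lam * x"
  shows "ereal (lam * c - Lambda_real M lam) \<le> rate M x"
proof -
  have "ereal (lam * c - Lambda_real M lam) \<le> ereal (lam * x) - Lambda M lam"
    using assms by (simp add: Lambda_eq_Lambda_real)
  also have "\<dots> \<le> rate M x" by (rule rate_ge)
  finally show ?thesis .
qed

lemma exists_secant_below_right:
  fixes F :: "real \<Rightarrow> real"
  assumes "(F has_real_derivative D) (at 0)" "F 0 = 0" "open S" "0 \<in> S" "D < c"
  shows "\<exists>h>0. h \<in> S \<and> F h < h * c"
proof -
  obtain e where e: "e > 0" "ball 0 e \<subseteq> S"
    using assms(3,4) open_contains_ball by blast
  have "((\<lambda>h. F h / h) \<longlongrightarrow> D) (at_right 0)"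
    using assms(1,2) unfolding DERIV_def by (auto intro: tendsto_mono[OF at_le])
  then have "\<forall>\<^sub>F h in at_right 0. F h / h < c \<and> h \<in> {0<..<e}"
    using order_tendstoD(2) assms(5) eventually_at_right_real[OF e(1)] eventually_conj by blast
  then obtain h where "F h / h < c" "h \<in> {0<..<e}"
    using eventually_happens'[OF trivial_limit_at_right_real] by blast
  then show ?thesis
    using e(2) by (intro exI[of _ h]) (auto simp: pos_divide_less_eq mult.commute)
qed

lemma exists_secant_below_left:
  fixes F :: "real \<Rightarrow> real"
  assumes "(F has_real_derivative D) (at 0)" "F 0 = 0" "open S" "0 \<in> S" "c < D"
  shows "\<exists>h<0. h \<in> S \<and> F h < h * c"
proof -
  have "((\<lambda>h. F (- h)) has_real_derivative - D) (at 0)"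
    using assms(1) DERIV_mirror[where f = F and x = 0 and y = D] by simp
  moreover have "open (uminus ` S)" "0 \<in> uminus ` S"
    using assms(3,4) open_negations by force+
  ultimately obtain h where "h > 0" "h \<in> uminus ` S" "F (- h) < h * - c"
    using exists_secant_below_right[of "\<lambda>h. F (- h)" "- D" "uminus ` S" "- c"] assms(2,5) by auto
  then show ?thesis by (intro exI[of _ "- h"]) force
qed

locale cramer_distribution = real_distribution +
  assumes integrable_id: "integrable M (\<lambda>x. x)"
    and assumption2: "assumption2 M"
    and assumption3: "assumption3 M"
begin

lemma Lambda_real_has_derivative_mean:
  "(Lambda_real M has_real_derivative (\<integral>x. x \<partial>M)) (at 0)"
proof -
  define \<mu> where "\<mu> = (\<integral>x. x \<partial>M)"
  have "\<forall>lam\<in>interior (dom_Lambda M). Lambda_real M differentiable (at lam)"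
    using assumption3 unfolding assumption3_def steep_def by (elim conjE) assumption
  then obtain D where D: "(Lambda_real M has_real_derivative D) (at 0)"
    using assumption2 unfolding assumption2_def real_differentiable_def by blast
  obtain e where e: "e > 0" "ball 0 e \<subseteq> dom_Lambda M"
    using assumption2 unfolding assumption2_def mem_interior by blast
  have "((\<lambda>h. Lambda_real M h - h * \<mu>) has_real_derivative D - \<mu>) (at 0)"
    by (rule derivative_eq_intros D refl | simp)+
  moreover have "Lambda_real M 0 - 0 * \<mu> \<le> Lambda_real M h - h * \<mu>" if "\<bar>0 - h\<bar> < e" for h
  proof -
    have "h \<in> dom_Lambda M" using e that by auto
    then show ?thesis
      using Lambda_ge_mean[OF integrable_id, of h]
      by (simp add: Lambda_eq_Lambda_real Lambda_real_zero \<mu>_def)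
  qed
  ultimately have "D - \<mu> = 0"
    using DERIV_local_min[OF _ e(1)] by blast
  with D show ?thesis by (simp add: \<mu>_def)
qed

lemma rate_mean: "rate M (\<integral>x. x \<partial>M) = 0"
proof -
  have "rate M (\<integral>x. x \<partial>M) \<le> 0"
    unfolding rate_def
  proof (rule SUP_least)
    fix lam
    show "ereal (lam * (\<integral>x. x \<partial>M)) - Lambda M lam \<le> 0"
      using Lambda_ge_mean[OF integrable_id, of lam] by (cases "Lambda M lam") auto
  qed
  then show ?thesis using rate_nonneg by (simp add: antisym)
qed

lemma rate_bounded_away_above:
  assumes "(\<integral>x. x \<partial>M) < c"
  shows "\<exists>d>0. \<forall>x\<ge>c. ereal d \<le> rate M x"
proof -
  obtain h where h: "h > 0" "h \<in> interior (dom_Lambda M)" "Lambda_real M h < h * c"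
    using exists_secant_below_right[OF Lambda_real_has_derivative_mean Lambda_real_zero]
      assumption2 assms unfolding assumption2_def by blast
  have "ereal (h * c - Lambda_real M h) \<le> rate M x" if "c \<le> x" for x
    using h that interior_subset by (intro rate_ge_secant) (auto simp: mult_left_mono)
  then show ?thesis using h(3) by (intro exI[of _ "h * c - Lambda_real M h"]) auto
qed

lemma rate_bounded_away_below:
  assumes "c < (\<integral>x. x \<partial>M)"
  shows "\<exists>d>0. \<forall>x\<le>c. ereal d \<le> rate M x"
proof -
  obtain h where h: "h < 0" "h \<in> interior (dom_Lambda M)" "Lambda_real M h < h * c"
    using exists_secant_below_left[OF Lambda_real_has_derivative_mean Lambda_real_zero]
      assumption2 assms unfolding assumption2_def by blast
  have "ereal (h * c - Lambda_real M h) \<le> rate M x" if "x \<le> c" for x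
    using h that interior_subset by (intro rate_ge_secant) (auto simp: mult_left_mono_neg)
  then show ?thesis using h(3) by (intro exI[of _ "h * c - Lambda_real M h"]) auto
qed

end

definition inf_weighted_sum :: "(real \<Rightarrow> ereal) \<Rightarrow> (real \<Rightarrow> ereal) \<Rightarrow> real \<Rightarrow> real \<Rightarrow> ereal" where
  "inf_weighted_sum f g a b = (INF x. ereal a * f x + ereal b * g x)"

lemma G_eq_inf_weighted_sum: "G M i j a b = inf_weighted_sum (rate (M i)) (rate (M j)) a b"
  unfolding G_def inf_weighted_sum_def ..

lemma inf_weighted_sum_zero_left: "inf_weighted_sum f g 0 b \<le> ereal b * g y"
  unfolding inf_weighted_sum_def by (rule INF_lower2[of y]) (auto simp: zero_ereal_def[symmetric])

lemma inf_weighted_sum_zero_right: "inf_weighted_sum f g a 0 \<le> ereal a * f y"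
  unfolding inf_weighted_sum_def by (rule INF_lower2[of y]) (auto simp: zero_ereal_def[symmetric])

context
  fixes f g :: "real \<Rightarrow> ereal"
  assumes f_nonneg: "\<And>x. 0 \<le> f x" and g_nonneg: "\<And>x. 0 \<le> g x"
begin

lemma inf_weighted_sum_nonneg: "0 \<le> a \<Longrightarrow> 0 \<le> b \<Longrightarrow> 0 \<le> inf_weighted_sum f g a b"
  unfolding inf_weighted_sum_def by (rule INF_greatest) (simp add: f_nonneg g_nonneg)

lemma inf_weighted_sum_mono:
  "0 \<le> a \<Longrightarrow> a \<le> a' \<Longrightarrow> 0 \<le> b \<Longrightarrow> b \<le> b' \<Longrightarrow> inf_weighted_sum f g a b \<le> inf_weighted_sum f g a' b'"
  unfolding inf_weighted_sum_def
  by (intro INF_mono' add_mono ereal_mult_right_mono) (auto simp: f_nonneg g_nonneg)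

lemma inf_weighted_sum_scale:
  assumes "0 < t" "0 \<le> a" "0 \<le> b"
  shows "ereal t * inf_weighted_sum f g a b \<le> inf_weighted_sum f g (t * a) (t * b)"
  unfolding inf_weighted_sum_def
proof (rule INF_greatest)
  fix x
  have "ereal t * (INF x. ereal a * f x + ereal b * g x) \<le> ereal t * (ereal a * f x + ereal b * g x)"
    using assms by (intro ereal_mult_left_mono INF_lower) auto
  also have "\<dots> = ereal (t * a) * f x + ereal (t * b) * g x"
    using assms by (simp add: ereal_right_distrib f_nonneg g_nonneg mult.assoc[symmetric])
  finally show "ereal t * (INF x. ereal a * f x + ereal b * g x)
      \<le> ereal (t * a) * f x + ereal (t * b) * g x" .
qed

lemma inf_weighted_sum_pos:
  assumes "0 < d" "\<And>x. x \<le> c \<Longrightarrow> ereal d \<le> f x"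
    and "0 < d'" "\<And>x. c \<le> x \<Longrightarrow> ereal d' \<le> g x"
    and "0 < a" "0 < b"
  shows "0 < inf_weighted_sum f g a b"
proof -
  have "ereal (min (a * d) (b * d')) \<le> ereal a * f x + ereal b * g x" for x
  proof (cases "x \<le> c")
    case True
    have "ereal (min (a * d) (b * d')) \<le> ereal a * ereal d" by simp
    also have "\<dots> \<le> ereal a * f x" using assms True by (intro ereal_mult_left_mono) auto
    also have "\<dots> \<le> ereal a * f x + ereal b * g x" using assms g_nonneg by (simp add: add_increasing2)
    finally show ?thesis .
  next
    case False
    have "ereal (min (a * d) (b * d')) \<le> ereal b * ereal d'" by simp
    also have "\<dots> \<le> ereal b * g x" using assms False by (intro ereal_mult_left_mono) auto
    also have "\<dots> \<le> ereal a * f x + ereal b * g x" using assms f_nonneg by (simp add: add_increasing)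
    finally show ?thesis .
  qed
  then have "ereal (min (a * d) (b * d')) \<le> inf_weighted_sum f g a b"
    unfolding inf_weighted_sum_def by (rule INF_greatest)
  moreover have "0 < ereal (min (a * d) (b * d'))" using assms by simp
  ultimately show ?thesis by order
qed

end

lemma G_pos:
  assumes "cramer_distribution (M i)" "cramer_distribution (M j)"
    and "(\<integral>x. x \<partial>M j) < (\<integral>x. x \<partial>M i)" "0 < a" "0 < b"
  shows "0 < G M i j a b"
proof -
  interpret i: cramer_distribution "M i" by (rule assms(1))
  interpret j: cramer_distribution "M j" by (rule assms(2))
  define c where "c = ((\<integral>x. x \<partial>M i) + (\<integral>x. x \<partial>M j)) / 2"
  obtain d1 where "d1 > 0" "\<forall>x\<le>c. ereal d1 \<le> rate (M i) x"
    using i.rate_bounded_away_below[of c] assms(3) by (auto simp: c_def)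
  moreover obtain d2 where "d2 > 0" "\<forall>x\<ge>c. ereal d2 \<le> rate (M j) x"
    using j.rate_bounded_away_above[of c] assms(3) by (auto simp: c_def)
  ultimately show ?thesis
    unfolding G_eq_inf_weighted_sum
    using assms(4,5) i.rate_nonneg j.rate_nonneg
    by (intro inf_weighted_sum_pos[where d = d1 and d' = d2 and c = c]) auto
qed

lemma alloc_simplex_nonneg: "r \<in> alloc_simplex k \<Longrightarrow> l \<in> {1..k} \<Longrightarrow> 0 \<le> r l"
  by (simp add: alloc_simplex_def)

definition shift_mass :: "nat \<Rightarrow> nat \<Rightarrow> real \<Rightarrow> (nat \<Rightarrow> real) \<Rightarrow> nat \<Rightarrow> real" where
  "shift_mass k s t r l = (if l = s then t * r s else r l + (1 - t) * r s / (real k - 1))"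

lemma shift_mass_in_alloc_simplex:
  assumes r: "r \<in> alloc_simplex k" and s: "s \<in> {1..k}" and "2 \<le> k" "0 \<le> t" "t \<le> 1"
  shows "shift_mass k s t r \<in> alloc_simplex k"
proof -
  define d where "d = (1 - t) * r s / (real k - 1)"
  have r_nonneg: "\<forall>l\<in>{1..k}. 0 \<le> r l" and r_sum: "(\<Sum>l=1..k. r l) = 1"
    using r by (auto simp: alloc_simplex_def)
  have d: "0 \<le> d" "(real k - 1) * d = (1 - t) * r s"
    using assms r_nonneg by (auto simp: d_def)
  have "(\<Sum>l=1..k. shift_mass k s t r l) = t * r s + (\<Sum>l\<in>{1..k} - {s}. r l + d)"
    using s by (simp add: sum.remove shift_mass_def d_def)
  also have "\<dots> = t * r s + (1 - r s) + (real k - 1) * d"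
    using s assms(3) r_sum by (simp add: sum.distrib sum.remove of_nat_diff algebra_simps)
  also have "\<dots> = 1"
    using d by (simp add: algebra_simps)
  finally show ?thesis
    using r_nonneg d assms(4) unfolding alloc_simplex_def shift_mass_def d_def[symmetric] by auto
qed

lemma shift_mass_ge:
  assumes "r \<in> alloc_simplex k" "s \<in> {1..k}" "l \<in> {1..k}" "2 \<le> k" "0 \<le> t" "t \<le> 1"
  shows "t * r l \<le> shift_mass k s t r l"
proof -
  have "0 \<le> r l" "0 \<le> r s" using assms by (auto simp: alloc_simplex_def)
  then have "t * r l \<le> r l" "0 \<le> (1 - t) * r s / (real k - 1)"
    using assms by (simp_all add: mult_left_le_one_le)
  then show ?thesis by (simp add: shift_mass_def)
qed

lemma ereal_less_scaled:
  fixes W :: ereal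
  assumes "0 \<le> v" "ereal v < W"
  obtains t where "0 < t" "t < 1" "ereal v < ereal t * W"
proof -
  obtain w where w: "ereal v < ereal w" "ereal w < W"
    using ereal_dense2[OF assms(2)] by blast
  define t where "t = (v + w) / (2 * w)"
  have "0 < w" using assms(1) w by simp
  then have t: "0 < t" "t < 1" "v < t * w"
    using assms(1) w by (auto simp: t_def field_simps)
  have "ereal v < ereal t * ereal w" using t by simp
  also have "\<dots> \<le> ereal t * W" using t w by (intro ereal_mult_left_mono) auto
  finally show ?thesis using t that by blast
qed

locale pairwise_rates =
  fixes k m :: nat and g :: "nat \<Rightarrow> nat \<Rightarrow> real \<Rightarrow> real \<Rightarrow> ereal"
  assumes m_bounds: "1 \<le> m" "m < k"
    and nonneg: "\<And>i j a b. i \<in> {1..m} \<Longrightarrow> j \<in> {m+1..k} \<Longrightarrow> 0 \<le> a \<Longrightarrow> 0 \<le> b \<Longrightarrow> 0 \<le> g i j a b"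
    and mono: "\<And>i j a b a' b'. i \<in> {1..m} \<Longrightarrow> j \<in> {m+1..k} \<Longrightarrow> 0 \<le> a \<Longrightarrow> a \<le> a' \<Longrightarrow>
      0 \<le> b \<Longrightarrow> b \<le> b' \<Longrightarrow> g i j a b \<le> g i j a' b'"
    and scale: "\<And>i j t a b. i \<in> {1..m} \<Longrightarrow> j \<in> {m+1..k} \<Longrightarrow> 0 < t \<Longrightarrow> 0 \<le> a \<Longrightarrow> 0 \<le> b \<Longrightarrow>
      ereal t * g i j a b \<le> g i j (t * a) (t * b)"
    and zero_left: "\<And>i j b. i \<in> {1..m} \<Longrightarrow> j \<in> {m+1..k} \<Longrightarrow> 0 \<le> b \<Longrightarrow> g i j 0 b \<le> 0"
    and zero_right: "\<And>i j a. i \<in> {1..m} \<Longrightarrow> j \<in> {m+1..k} \<Longrightarrow> 0 \<le> a \<Longrightarrow> g i j a 0 \<le> 0"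
    and pos: "\<And>i j a b. i \<in> {1..m} \<Longrightarrow> j \<in> {m+1..k} \<Longrightarrow> 0 < a \<Longrightarrow> 0 < b \<Longrightarrow> 0 < g i j a b"
begin

definition worst_pair_rate :: "(nat \<Rightarrow> real) \<Rightarrow> ereal" where
  "worst_pair_rate r = (INF p\<in>{1..m} \<times> {m+1..k}. g (fst p) (snd p) (r (fst p)) (r (snd p)))"

lemma worst_pair_rate_le:
  "i \<in> {1..m} \<Longrightarrow> j \<in> {m+1..k} \<Longrightarrow> worst_pair_rate r \<le> g i j (r i) (r j)"
  unfolding worst_pair_rate_def by (rule INF_lower2[of "(i, j)"]) auto

lemma worst_pair_rate_nonneg: "r \<in> alloc_simplex k \<Longrightarrow> 0 \<le> worst_pair_rate r"
  unfolding worst_pair_rate_def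
  by (rule INF_greatest) (use m_bounds in \<open>auto intro!: nonneg simp: alloc_simplex_def\<close>)

lemma exists_pair_through:
  assumes "s \<in> {1..k}"
  obtains i j where "i \<in> {1..m}" "j \<in> {m+1..k}" "s = i \<or> s = j"
proof (cases "s \<le> m")
  case True
  then show ?thesis using that[of s k] assms m_bounds by auto
next
  case False
  then show ?thesis using that[of 1 s] assms m_bounds by auto
qed

lemma less_g_add:
  assumes ij: "i \<in> {1..m}" "j \<in> {m+1..k}"
    and v: "0 \<le> v" "ereal v \<le> g i j a b" and ab: "0 \<le> a" "0 \<le> b" and d: "0 < d"
  shows "ereal v < g i j (a + d) (b + d)"
proof (cases "v = 0")
  case True
  have "0 < g i j (a + d) (b + d)" using ab d by (intro pos ij) auto
  with True show ?thesis by (simp add: zero_ereal_def)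
next
  case False
  with v(1) have v_pos: "0 < v" by simp
  have "0 < a"
  proof (rule ccontr)
    assume "\<not> 0 < a"
    with v(2) ab have "ereal v \<le> g i j 0 b" by simp
    also have "\<dots> \<le> 0" using zero_left ij ab by blast
    finally show False using v_pos by simp
  qed
  moreover have "0 < b"
  proof (rule ccontr)
    assume "\<not> 0 < b"
    with v(2) ab have "ereal v \<le> g i j a 0" by simp
    also have "\<dots> \<le> 0" using zero_right ij ab by blast
    finally show False using v_pos by simp
  qed
  ultimately obtain t where t: "1 < t" "t * a \<le> a + d" "t * b \<le> b + d"
    using d by (intro that[of "min ((a + d) / a) ((b + d) / b)"]) (auto simp: field_simps min_def)
  have "ereal v < ereal t * ereal v" using t v_pos by simp
  also have "\<dots> \<le> ereal t * g i j a b" using t v by (intro ereal_mult_left_mono) auto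
  also have "\<dots> \<le> g i j (t * a) (t * b)" using t ab by (intro scale ij) auto
  also have "\<dots> \<le> g i j (a + d) (b + d)" using t ab by (intro mono ij) auto
  finally show ?thesis .
qed

lemma worst_pair_rate_shift_mass_gt:
  assumes r: "r \<in> alloc_simplex k" and s: "s \<in> {1..k}" and rs: "0 < r s"
    and v: "worst_pair_rate r = ereal v" and t: "0 < t" "t < 1" "ereal v < ereal t * W"
    and W: "\<And>i j. i \<in> {1..m} \<Longrightarrow> j \<in> {m+1..k} \<Longrightarrow> s = i \<or> s = j \<Longrightarrow> W \<le> g i j (r i) (r j)"
  shows "worst_pair_rate r < worst_pair_rate (shift_mass k s t r)"
proof -
  let ?r' = "shift_mass k s t r"
  have k2: "2 \<le> k" using m_bounds by simp
  have "ereal v < g i j (?r' i) (?r' j)" if ij: "i \<in> {1..m}" "j \<in> {m+1..k}" for i j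
  proof -
    have ijk: "i \<in> {1..k}" "j \<in> {1..k}" "0 \<le> r i" "0 \<le> r j"
      using ij m_bounds alloc_simplex_nonneg[OF r] by auto
    show ?thesis
    proof (cases "s = i \<or> s = j")
      case True
      have "ereal v < ereal t * W" by (rule t(3))
      also have "\<dots> \<le> ereal t * g i j (r i) (r j)"
        using W[OF ij True] t by (intro ereal_mult_left_mono) auto
      also have "\<dots> \<le> g i j (t * r i) (t * r j)"
        using t ijk by (intro scale ij) auto
      also have "\<dots> \<le> g i j (?r' i) (?r' j)"
        using t r s ijk k2 by (intro mono ij shift_mass_ge) auto
      finally show ?thesis .
    next
      case False
      define d where "d = (1 - t) * r s / (real k - 1)"
      have "?r' i = r i + d" "?r' j = r j + d"
        using False by (auto simp: shift_mass_def d_def)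
      moreover have "0 < d" using t rs k2 by (simp add: d_def)
      ultimately show ?thesis
        using less_g_add[OF ij] worst_pair_rate_nonneg[OF r] worst_pair_rate_le[OF ij, of r] v ijk
        by simp
    qed
  qed
  then show ?thesis
    unfolding v worst_pair_rate_def[of ?r'] using m_bounds
    by (subst finite_less_Inf_iff) auto
qed

lemma optimal_worst_pair_rate_ge:
  assumes r: "r \<in> alloc_simplex k"
    and opt: "\<And>r'. r' \<in> alloc_simplex k \<Longrightarrow> worst_pair_rate r' \<le> worst_pair_rate r"
    and s: "s \<in> {1..k}"
    and W: "\<And>i j. i \<in> {1..m} \<Longrightarrow> j \<in> {m+1..k} \<Longrightarrow> s = i \<or> s = j \<Longrightarrow> W \<le> g i j (r i) (r j)"
  shows "W \<le> worst_pair_rate r"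
proof (rule ccontr)
  assume "\<not> W \<le> worst_pair_rate r"
  then have less: "worst_pair_rate r < W" by simp
  obtain v where v: "worst_pair_rate r = ereal v" "0 \<le> v"
    using worst_pair_rate_nonneg[OF r] less by (cases "worst_pair_rate r") auto
  have "0 < r s"
  proof (rule ccontr)
    assume "\<not> 0 < r s"
    then have rs: "r s = 0" using alloc_simplex_nonneg[OF r s] by simp
    obtain i j where ij: "i \<in> {1..m}" "j \<in> {m+1..k}" "s = i \<or> s = j"
      using exists_pair_through[OF s] .
    then have "0 \<le> r i" "0 \<le> r j"
      using m_bounds alloc_simplex_nonneg[OF r] by auto
    then have "g i j (r i) (r j) \<le> 0"
      using ij rs zero_left zero_right by auto
    with W[OF ij] less v(1) have "ereal v < 0" by order
    with v(2) show False by simp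
  qed
  moreover obtain t where t: "0 < t" "t < 1" "ereal v < ereal t * W"
    using ereal_less_scaled[of v W] v less by auto
  ultimately have "worst_pair_rate r < worst_pair_rate (shift_mass k s t r)"
    using worst_pair_rate_shift_mass_gt[OF r s _ v(1) t W] by blast
  moreover have "shift_mass k s t r \<in> alloc_simplex k"
    using r s t m_bounds by (intro shift_mass_in_alloc_simplex) auto
  ultimately show False using opt by (simp add: not_le[symmetric])
qed

lemma optimal_row_rate:
  assumes "r \<in> alloc_simplex k"
    and "\<And>r'. r' \<in> alloc_simplex k \<Longrightarrow> worst_pair_rate r' \<le> worst_pair_rate r"
    and i: "i \<in> {1..m}"
  shows "(INF j\<in>{m+1..k}. g i j (r i) (r j)) = worst_pair_rate r"
proof (rule antisym)
  show "(INF j\<in>{m+1..k}. g i j (r i) (r j)) \<le> worst_pair_rate r"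
  proof (rule optimal_worst_pair_rate_ge[OF assms(1,2)])
    show "i \<in> {1..k}" using i m_bounds by simp
    fix i' j assume "i' \<in> {1..m}" "j \<in> {m+1..k}" "i = i' \<or> i = j"
    then show "(INF j\<in>{m+1..k}. g i j (r i) (r j)) \<le> g i' j (r i') (r j)"
      using i by (auto intro: INF_lower)
  qed
  show "worst_pair_rate r \<le> (INF j\<in>{m+1..k}. g i j (r i) (r j))"
    using i by (intro INF_greatest worst_pair_rate_le)
qed

lemma optimal_column_rate:
  assumes "r \<in> alloc_simplex k"
    and "\<And>r'. r' \<in> alloc_simplex k \<Longrightarrow> worst_pair_rate r' \<le> worst_pair_rate r"
    and j: "j \<in> {m+1..k}"
  shows "(INF i\<in>{1..m}. g i j (r i) (r j)) = worst_pair_rate r"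
proof (rule antisym)
  show "(INF i\<in>{1..m}. g i j (r i) (r j)) \<le> worst_pair_rate r"
  proof (rule optimal_worst_pair_rate_ge[OF assms(1,2)])
    show "j \<in> {1..k}" using j m_bounds by simp
    fix i j' assume "i \<in> {1..m}" "j' \<in> {m+1..k}" "j = i \<or> j = j'"
    then show "(INF i\<in>{1..m}. g i j (r i) (r j)) \<le> g i j' (r i) (r j')"
      using j by (auto intro: INF_lower)
  qed
  show "worst_pair_rate r \<le> (INF i\<in>{1..m}. g i j (r i) (r j))"
    using j by (intro INF_greatest worst_pair_rate_le)
qed

end

lemma pairwise_rates_G:
  assumes "1 \<le> m" "m < k"
    and cramer: "\<And>l. l \<in> {1..k} \<Longrightarrow> cramer_distribution (M l)"
    and ordered: "\<And>i j. i \<in> {1..k} \<Longrightarrow> j \<in> {1..k} \<Longrightarrow> i < j \<Longrightarrow>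
      (\<integral>x. x \<partial>M j) < (\<integral>x. x \<partial>M i)"
  shows "pairwise_rates k m (G M)"
proof -
  have rate_nonneg: "0 \<le> rate (M l) x" if "l \<in> {1..k}" for l x
    using cramer[OF that] by (simp add: cramer_distribution_def real_distribution.rate_nonneg)
  have rate_mean: "rate (M l) (\<integral>x. x \<partial>M l) = 0" if "l \<in> {1..k}" for l
    using cramer[OF that] by (rule cramer_distribution.rate_mean)
  have index: "i \<in> {1..k}" "j \<in> {1..k}" "i < j" if "i \<in> {1..m}" "j \<in> {m+1..k}" for i j
    using that assms(2) by auto
  show ?thesis
  proof unfold_locales
    show "1 \<le> m" "m < k" by fact+
  next
    fix i j :: nat and a b :: real assume "i \<in> {1..m}" "j \<in> {m+1..k}" "0 \<le> a" "0 \<le> b"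
    then show "0 \<le> G M i j a b"
      unfolding G_eq_inf_weighted_sum by (intro inf_weighted_sum_nonneg rate_nonneg index)
  next
    fix i j :: nat and a b a' b' :: real
    assume "i \<in> {1..m}" "j \<in> {m+1..k}" "0 \<le> a" "a \<le> a'" "0 \<le> b" "b \<le> b'"
    then show "G M i j a b \<le> G M i j a' b'"
      unfolding G_eq_inf_weighted_sum by (intro inf_weighted_sum_mono rate_nonneg index)
  next
    fix i j :: nat and t a b :: real
    assume "i \<in> {1..m}" "j \<in> {m+1..k}" "0 < t" "0 \<le> a" "0 \<le> b"
    then show "ereal t * G M i j a b \<le> G M i j (t * a) (t * b)"
      unfolding G_eq_inf_weighted_sum by (intro inf_weighted_sum_scale rate_nonneg index)
  next
    fix i j :: nat and b :: real assume "i \<in> {1..m}" "j \<in> {m+1..k}" "0 \<le> b"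
    have "G M i j 0 b \<le> ereal b * rate (M j) (\<integral>x. x \<partial>M j)"
      unfolding G_eq_inf_weighted_sum by (rule inf_weighted_sum_zero_left)
    with \<open>j \<in> {m+1..k}\<close> show "G M i j 0 b \<le> 0" by (simp add: rate_mean)
  next
    fix i j :: nat and a :: real assume "i \<in> {1..m}" "j \<in> {m+1..k}" "0 \<le> a"
    have "G M i j a 0 \<le> ereal a * rate (M i) (\<integral>x. x \<partial>M i)"
      unfolding G_eq_inf_weighted_sum by (rule inf_weighted_sum_zero_right)
    with \<open>i \<in> {1..m}\<close> \<open>m < k\<close> show "G M i j a 0 \<le> 0" by (simp add: rate_mean)
  next
    fix i j :: nat and a b :: real assume "i \<in> {1..m}" "j \<in> {m+1..k}" "0 < a" "0 < b"
    then show "0 < G M i j a b"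
      using index by (intro G_pos cramer ordered) auto
  qed
qed

theorem corollary1:
  fixes M :: "nat \<Rightarrow> real measure" and k m :: nat and rstar :: "nat \<Rightarrow> real"
  assumes "k \<ge> 2" and "1 \<le> m" and "m < k"
    and prob: "\<And>l. l \<in> {1..k} \<Longrightarrow> prob_space (M l)"
    and borel: "\<And>l. l \<in> {1..k} \<Longrightarrow> sets (M l) = sets borel"
    and integ: "\<And>l. l \<in> {1..k} \<Longrightarrow> integrable (M l) (\<lambda>x. x)"
    and ordered: "\<And>i j. i \<in> {1..k} \<Longrightarrow> j \<in> {1..k} \<Longrightarrow> i < j \<Longrightarrow>
                    (\<integral>x. x \<partial>M j) < (\<integral>x. x \<partial>M i)"
    and A1: "\<And>l. l \<in> {1..k} \<Longrightarrow> assumption1 (M l)"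
    and A2: "\<And>l. l \<in> {1..k} \<Longrightarrow> assumption2 (M l)"
    and A3: "\<And>l. l \<in> {1..k} \<Longrightarrow> assumption3 (M l)"
    and A4: "{(\<integral>x. x \<partial>M k) .. (\<integral>x. x \<partial>M 1)} \<subseteq> (\<Inter>l\<in>{1..k}. interior (F_set (M l)))"
    and feas: "rstar \<in> alloc_simplex k"
    and opt: "\<And>r. r \<in> alloc_simplex k \<Longrightarrow> objective M k m r \<le> objective M k m rstar"
    and h: "h \<in> {1..m}" and l: "l \<in> {m+1..k}"
  shows "(INF j\<in>{m+1..k}. G M h j (rstar h) (rstar j)) =
         (INF i\<in>{1..m}. G M i l (rstar i) (rstar l))"
proof -
  have "cramer_distribution (M l)" if "l \<in> {1..k}" for l
  proof -
    interpret prob_space "M l" by (rule prob[OF that])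
    show ?thesis using borel integ A2 A3 that by unfold_locales auto
  qed
  then interpret pairwise_rates k m "G M"
    using \<open>1 \<le> m\<close> \<open>m < k\<close> ordered by (intro pairwise_rates_G)
  have optimal: "\<And>r. r \<in> alloc_simplex k \<Longrightarrow> worst_pair_rate r \<le> worst_pair_rate rstar"
    using opt by (simp add: objective_def worst_pair_rate_def)
  show ?thesis
    using optimal_row_rate[OF feas optimal h] optimal_column_rate[OF feas optimal l] by simp
qed

end
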